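(* Let $\delta:(0,\infty)\to(0,\tfrac14)$ be a function with $\delta(\varepsilon)\to0$ as $\varepsilon\to0^+$. For every $\alpha\in(0,1)$ there exist $r=r(\alpha)>0$ and $\bar\varepsilon_2>0$ (depending only on $\alpha$ and $\delta$) such that: if $E\subseteq\mathbb{R}^2$ is convex with $B_{1-\delta(\varepsilon)}\subseteq E\subseteq B_{1+\delta(\varepsilon)}$ for some $0<\varepsilon<\bar\varepsilon_2$, then \[ \left\{y\in B_r(x):\ \frac{x-y}{|x-y|}\cdot\nu_E(x)\ge\alpha\right\}\subseteq E\qquad\text{for }\mathcal{H}^1\text{-a.e. }x\in\partial E, \] where $\nu_E(x)$ is the outer unit normal to $E$ at $x$.
   Context: $B_r(x)$ is the open ball of radius $r$ centered at $x$ in $\mathbb{R}^2$, and $B_r=B_r(0)$. For a convex set $E$ the outer unit normal $\nu_E(x)$ exists for $\mathcal{H}^1$-a.e. $x\in\partial E$. *)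

theory Defs
  imports "HOL-Analysis.Analysis"
begin

definition H1_null :: "(real^2) set \<Rightarrow> bool" where
  "H1_null S \<longleftrightarrow> (\<forall>e>0. \<exists>C :: nat \<Rightarrow> (real^2) set.
      S \<subseteq> (\<Union>n. C n) \<and> (\<forall>n. bounded (C n)) \<and>
      summable (\<lambda>n. diameter (C n)) \<and> (\<Sum>n. diameter (C n)) < e)"

definition H1_ae_on :: "(real^2) set \<Rightarrow> (real^2 \<Rightarrow> bool) \<Rightarrow> bool" where
  "H1_ae_on S P \<longleftrightarrow> H1_null {x \<in> S. \<not> P x}"

definition outer_normal :: "(real^2) set \<Rightarrow> real^2 \<Rightarrow> real^2 \<Rightarrow> bool" where
  "outer_normal E x \<nu> \<longleftrightarrow> norm \<nu> = 1 \<and> (\<forall>y\<in>E. (y - x) \<bullet> \<nu> \<le> 0)"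

text \<open>The outer unit normal nu_E(x), meaningful where it is unique.\<close>
definition nu :: "(real^2) set \<Rightarrow> real^2 \<Rightarrow> real^2" where
  "nu E x = (THE \<nu>. outer_normal E x \<nu>)"

end

(* At a boundary point x of a convex E with B_{1-d} \<subseteq> E \<subseteq> B_{1+d} and outer unit normal \<nu>,
   the vector x is almost parallel to \<nu>. Hence a step of length \<alpha>/2 from x in any direction u with
   u \<bullet> \<nu> \<le> -\<alpha> ends inside B_{1-d} as soon as d < \<alpha>^2/64, and by convexity the open segment from that
   endpoint to x lies in the interior of E; these segments sweep out the truncated cone. The cone
   property can only fail where the outer normal is not unique. In the plane the normal cone at
   such a point has interior, and normal cones at distinct boundary points have disjoint
   interiors, so there are only countably many such points, an H^1-null set. *)

theory Submission
  imports Defs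
begin

lemma countable_imp_H1_null: "countable S \<Longrightarrow> H1_null S"
proof -
  assume "countable S"
  hence "countable (insert 0 S)" by simp
  hence "range (from_nat_into (insert 0 S)) = insert 0 S"
    by (simp add: range_from_nat_into)
  thus ?thesis unfolding H1_null_def
    by (intro allI impI exI[of _ "\<lambda>n. {from_nat_into (insert 0 S) n}"]) auto
qed

definition normal_cone :: "'a::real_inner set \<Rightarrow> 'a \<Rightarrow> 'a set" where
  "normal_cone E x = {\<mu>. \<forall>y\<in>E. (y - x) \<bullet> \<mu> \<le> 0}"

lemma outer_normal_iff_normal_cone:
  "outer_normal E x \<nu> \<longleftrightarrow> norm \<nu> = 1 \<and> \<nu> \<in> normal_cone E x"
  by (simp add: outer_normal_def normal_cone_def)

lemma convex_normal_cone: "convex (normal_cone E x)"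
proof -
  have "normal_cone E x = (\<Inter>y\<in>E. {\<mu>. (y - x) \<bullet> \<mu> \<le> 0})"
    by (auto simp: normal_cone_def)
  thus ?thesis by (simp add: convex_INT convex_halfspace_le)
qed

lemma normal_cone_closure: "normal_cone (closure E) x = normal_cone E x"
proof
  show "normal_cone (closure E) x \<subseteq> normal_cone E x"
    using closure_subset by (auto simp: normal_cone_def)
  show "normal_cone E x \<subseteq> normal_cone (closure E) x"
  proof
    fix \<mu> assume "\<mu> \<in> normal_cone E x"
    hence "E \<subseteq> {y. \<mu> \<bullet> y \<le> \<mu> \<bullet> x}"
      by (auto simp: normal_cone_def inner_diff_left inner_commute[of \<mu>])
    hence "closure E \<subseteq> {y. \<mu> \<bullet> y \<le> \<mu> \<bullet> x}"
      by (intro closure_minimal) (auto simp: closed_halfspace_le)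
    thus "\<mu> \<in> normal_cone (closure E) x"
      by (auto simp: normal_cone_def inner_diff_left inner_commute[of \<mu>])
  qed
qed

text \<open>If \<open>\<mu>\<close> is interior to the normal cone at \<open>x\<close>, then \<open>\<mu> + k (x' - x)\<close> is a normal at \<open>x\<close>
  for small \<open>k > 0\<close>, which together with \<open>\<mu>\<close> being normal at \<open>x'\<close> forces \<open>x' = x\<close>.\<close>
lemma interior_normal_cone_disjoint:
  assumes "x \<in> closure E" "x' \<in> closure E" "x \<noteq> x'"
  shows "interior (normal_cone E x) \<inter> normal_cone E x' = {}"
proof (rule ccontr)
  assume "interior (normal_cone E x) \<inter> normal_cone E x' \<noteq> {}"
  then obtain \<mu> where \<mu>: "\<mu> \<in> interior (normal_cone E x)" "\<mu> \<in> normal_cone E x'" by auto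
  then obtain e where e: "e > 0" "ball \<mu> e \<subseteq> normal_cone E x" by (meson mem_interior)
  define w where "w = x' - x"
  have w: "w \<bullet> w > 0" using assms by (simp add: w_def)
  define k where "k = e / (2 * norm w)"
  have k: "k > 0" using e w by (simp add: k_def)
  have "dist \<mu> (\<mu> + k *\<^sub>R w) < e" using w e by (simp add: dist_norm k_def)
  hence "\<mu> + k *\<^sub>R w \<in> normal_cone E x" using e(2) by auto
  hence "\<mu> + k *\<^sub>R w \<in> normal_cone (closure E) x" by (simp add: normal_cone_closure)
  hence "w \<bullet> \<mu> + k * (w \<bullet> w) \<le> 0"
    using assms(2) by (simp add: normal_cone_def w_def inner_add_right)
  moreover have "w \<bullet> \<mu> \<ge> 0"
    using \<mu>(2) assms(1) normal_cone_closure[of E x']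
    by (auto simp: normal_cone_def w_def inner_diff_left)
  ultimately show False using k w by (smt (verit) mult_pos_pos)
qed

lemma unit_normal_exists:
  fixes E :: "'a::euclidean_space set"
  assumes "convex E" "interior E \<noteq> {}" "x \<in> frontier E"
  obtains \<nu> where "norm \<nu> = 1" "\<nu> \<in> normal_cone E x"
proof -
  have "x \<in> closure E" "x \<notin> rel_interior E"
    using assms rel_interior_nonempty_interior[of E] by (auto simp: frontier_def)
  then obtain a where a: "a \<noteq> 0" "\<And>y. y \<in> closure E \<Longrightarrow> a \<bullet> x \<le> a \<bullet> y"
    using supporting_hyperplane_relative_frontier[OF assms(1)] by metis
  have "- (inverse (norm a)) *\<^sub>R a \<in> normal_cone E x"
    unfolding normal_cone_def
  proof (intro CollectI ballI)
    fix y assume "y \<in> E"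
    hence "a \<bullet> x \<le> a \<bullet> y" using a closure_subset by blast
    hence "0 \<le> inverse (norm a) * (a \<bullet> y - a \<bullet> x)" by simp
    thus "(y - x) \<bullet> - (inverse (norm a)) *\<^sub>R a \<le> 0"
      by (simp add: inner_diff_left inner_commute[of a] algebra_simps)
  qed
  moreover have "norm (- (inverse (norm a)) *\<^sub>R a) = 1" using a by simp
  ultimately show ?thesis using that by blast
qed

lemma normal_cone_antipodal_eq_0:
  fixes E :: "'a::euclidean_space set"
  assumes "interior E \<noteq> {}" "\<nu> \<in> normal_cone E x" "- \<nu> \<in> normal_cone E x"
  shows "\<nu> = 0"
proof (rule ccontr)
  assume "\<nu> \<noteq> 0"
  have "E \<subseteq> {y. \<nu> \<bullet> y = \<nu> \<bullet> x}"
    using assms(2,3) by (fastforce simp: normal_cone_def inner_diff_left inner_commute[of \<nu>])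
  hence "interior E \<subseteq> interior {y. \<nu> \<bullet> y = \<nu> \<bullet> x}" by (rule interior_mono)
  hence "interior E = {}" using \<open>\<nu> \<noteq> 0\<close> by simp
  thus False using assms(1) by blast
qed

lemma interior_convex_hull_0_nonempty:
  fixes a b :: "real^2"
  assumes "independent {a, b}" "a \<noteq> b"
  shows "interior (convex hull {0, a, b}) \<noteq> {}"
proof -
  have "a \<noteq> 0" "b \<noteq> 0" using assms dependent_zero by blast+
  hence "\<not> affine_dependent {0, a, b}"
    using affine_dependent_iff_dependent[of 0 "{a, b}"] assms by simp
  moreover have "card {0, a, b} = Suc DIM(real^2)"
    using \<open>a \<noteq> 0\<close> \<open>b \<noteq> 0\<close> assms(2) by simp
  ultimately show ?thesis using interior_convex_hull_eq_empty by blast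
qed

text \<open>In the plane two distinct unit normals span a cone with interior, unless they are
  antipodal, which a set with interior excludes.\<close>
lemma interior_normal_cone_nonempty:
  fixes E :: "(real^2) set"
  assumes "interior E \<noteq> {}" "outer_normal E x \<nu>1" "outer_normal E x \<nu>2" "\<nu>1 \<noteq> \<nu>2"
  shows "interior (normal_cone E x) \<noteq> {}"
proof -
  have u: "norm \<nu>1 = 1" "norm \<nu>2 = 1" and N: "\<nu>1 \<in> normal_cone E x" "\<nu>2 \<in> normal_cone E x"
    using assms(2,3) by (auto simp: outer_normal_iff_normal_cone)
  have "convex hull {0, \<nu>1, \<nu>2} \<subseteq> normal_cone E x"
    using N convex_normal_cone by (intro hull_minimal) (auto simp: normal_cone_def)
  moreover have "independent {\<nu>1, \<nu>2}"
  proof -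
    have "\<nu>1 \<notin> span {\<nu>2}"
    proof
      assume "\<nu>1 \<in> span {\<nu>2}"
      then obtain c where c: "\<nu>1 = c *\<^sub>R \<nu>2" by (auto simp: span_singleton)
      hence "\<bar>c\<bar> = 1" using u by simp
      hence "c = - 1" using c assms(4) by (cases "c = 1") (auto simp: abs_if split: if_splits)
      hence "\<nu>1 = - \<nu>2" using c by simp
      hence "\<nu>2 = 0" using N normal_cone_antipodal_eq_0[OF assms(1)] by blast
      thus False using u by simp
    qed
    moreover have "\<nu>2 \<noteq> 0" using u by auto
    ultimately show ?thesis using assms(4) by (simp add: independent_insert)
  qed
  ultimately show ?thesis
    using interior_convex_hull_0_nonempty[of \<nu>1 \<nu>2] assms(4) interior_mono by blast
qed

lemma countable_nonunique_outer_normal: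
  fixes E :: "(real^2) set"
  assumes "convex E" "interior E \<noteq> {}"
  shows "countable {x \<in> frontier E. \<not> (\<exists>!\<nu>. outer_normal E x \<nu>)}" (is "countable ?B")
proof -
  define f where "f x = interior (normal_cone E x)" for x
  have ne: "f x \<noteq> {}" if "x \<in> ?B" for x
  proof -
    have "x \<in> frontier E" using that by blast
    then obtain \<nu> where "norm \<nu> = 1" "\<nu> \<in> normal_cone E x" by (rule unit_normal_exists[OF assms])
    hence \<nu>: "outer_normal E x \<nu>" by (simp add: outer_normal_iff_normal_cone)
    with that obtain \<nu>' where "outer_normal E x \<nu>'" "\<nu>' \<noteq> \<nu>" by blast
    thus ?thesis using interior_normal_cone_nonempty[OF assms(2) \<nu>] by (simp add: f_def)
  qed
  have dj: "f x \<inter> f x' = {}" if "x \<in> ?B" "x' \<in> ?B" "x \<noteq> x'" for x x'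
    using interior_normal_cone_disjoint[of x E x'] that interior_subset[of "normal_cone E x'"]
    by (auto simp: f_def frontier_def)
  have "countable (f ` ?B)"
  proof (rule countable_disjoint_open_subsets)
    show "open S" if "S \<in> f ` ?B" for S using that by (auto simp: f_def)
    show "pairwise disjnt (f ` ?B)" unfolding pairwise_def disjnt_def using dj by blast
  qed
  moreover have "inj_on f ?B"
  proof (rule inj_onI)
    fix x x' assume "x \<in> ?B" "x' \<in> ?B" "f x = f x'"
    thus "x = x'" using dj[of x x'] ne[of x] by auto
  qed
  ultimately show ?thesis by (rule countable_image_inj_on)
qed

lemma normal_cone_ball_inner_ge:
  fixes \<nu> :: "'a::real_inner"
  assumes "ball 0 (1 - d) \<subseteq> E" "0 < d" "d < 1/2" "norm \<nu> = 1" "\<nu> \<in> normal_cone E x"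
  shows "1 - 2*d \<le> x \<bullet> \<nu>"
proof -
  have "(1 - 2*d) *\<^sub>R \<nu> \<in> E" using assms(1-4) by (auto simp: dist_norm)
  hence "((1 - 2*d) *\<^sub>R \<nu> - x) \<bullet> \<nu> \<le> 0" using assms(5) by (simp add: normal_cone_def)
  moreover have "\<nu> \<bullet> \<nu> = 1" using assms(4) by (simp add: norm_eq_1)
  ultimately show ?thesis by (simp add: inner_diff_left)
qed

lemma norm_orthogonal_part_le:
  fixes x \<nu> :: "'a::real_inner"
  assumes "norm \<nu> = 1" "0 \<le> b" "b \<le> x \<bullet> \<nu>" "norm x \<le> R"
  shows "(norm (x - (x \<bullet> \<nu>) *\<^sub>R \<nu>))\<^sup>2 \<le> R\<^sup>2 - b\<^sup>2"
proof -
  have "\<nu> \<bullet> \<nu> = 1" using assms(1) by (simp add: norm_eq_1)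
  hence "(x - (x \<bullet> \<nu>) *\<^sub>R \<nu>) \<bullet> (x - (x \<bullet> \<nu>) *\<^sub>R \<nu>) = x \<bullet> x - (x \<bullet> \<nu>)\<^sup>2"
    by (simp add: inner_diff_left inner_diff_right inner_commute power2_eq_square)
  hence "(norm (x - (x \<bullet> \<nu>) *\<^sub>R \<nu>))\<^sup>2 = (norm x)\<^sup>2 - (x \<bullet> \<nu>)\<^sup>2"
    by (simp add: power2_norm_eq_inner)
  moreover have "b\<^sup>2 \<le> (x \<bullet> \<nu>)\<^sup>2" "(norm x)\<^sup>2 \<le> R\<^sup>2"
    using assms(2-4) by (auto intro: power_mono)
  ultimately show ?thesis by linarith
qed

text \<open>Since \<open>x\<close> is nearly parallel to \<open>\<nu>\<close>, the step decreases \<open>|x|\<^sup>2\<close> by about \<open>\<alpha>\<^sup>2\<close>, which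
  beats the thickness \<open>4d\<close> of the annulus.\<close>
lemma norm_cone_step_lt:
  fixes x \<nu> u :: "'a::real_inner"
  assumes "norm \<nu> = 1" "norm u = 1" "u \<bullet> \<nu> \<le> - \<alpha>" "0 < \<alpha>" "\<alpha> < 1"
    and "0 < d" "d < \<alpha>\<^sup>2/64" "norm x \<le> 1 + d" "1 - 2*d \<le> x \<bullet> \<nu>"
  shows "norm (x + (\<alpha>/2) *\<^sub>R u) < 1 - d"
proof -
  define a where "a = x \<bullet> \<nu>"
  define p where "p = x - a *\<^sub>R \<nu>"
  have "\<alpha>\<^sup>2 < 1" using assms(4,5) by (simp add: power_less_one_iff)
  hence "d * \<alpha>\<^sup>2 \<le> d" "d < 1/64" using assms(6,7) by auto
  have a: "0 \<le> a" "(1 - 2*d) * \<alpha> \<le> a * \<alpha>"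
    using assms(4,9) \<open>d < 1/64\<close> by (auto simp: a_def intro: mult_right_mono)
  have "(norm p)\<^sup>2 \<le> (1 + d)\<^sup>2 - (1 - 2*d)\<^sup>2"
    unfolding p_def a_def using assms(1,8,9) \<open>d < 1/64\<close> by (intro norm_orthogonal_part_le) auto
  also have "\<dots> \<le> 6*d"
    by (simp add: power2_eq_square algebra_simps)
  also have "\<dots> < (\<alpha>/3)\<^sup>2"
    using assms(6,7) by (simp add: power_divide)
  finally have "norm p < \<alpha>/3"
    by (rule power_less_imp_less_base) (use assms(4) in simp)
  moreover have "x \<bullet> u = a * (u \<bullet> \<nu>) + p \<bullet> u"
    by (simp add: p_def inner_diff_left inner_commute[of \<nu> u])
  moreover have "a * (u \<bullet> \<nu>) \<le> a * (- \<alpha>)"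
    using assms(3) a(1) by (rule mult_left_mono)
  moreover have "p \<bullet> u \<le> norm p"
    using norm_cauchy_schwarz[of p u] assms(2) by simp
  ultimately have "x \<bullet> u \<le> - (1 - 2*d) * \<alpha> + \<alpha>/3"
    using a(2) by linarith
  hence "\<alpha> * (x \<bullet> u) \<le> \<alpha> * (- (1 - 2*d) * \<alpha> + \<alpha>/3)"
    using assms(4) by (intro mult_left_mono) auto
  also have "\<dots> = - (2/3) * \<alpha>\<^sup>2 + 2 * (d * \<alpha>\<^sup>2)"
    by (simp add: power2_eq_square algebra_simps)
  finally have "\<alpha> * (x \<bullet> u) \<le> - (2/3) * \<alpha>\<^sup>2 + 2 * (d * \<alpha>\<^sup>2)" .
  moreover have "(norm (x + (\<alpha>/2) *\<^sub>R u))\<^sup>2 = (norm x)\<^sup>2 + \<alpha> * (x \<bullet> u) + \<alpha>\<^sup>2/4"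
  proof -
    have "u \<bullet> u = 1" using assms(2) by (simp add: norm_eq_1)
    hence "(x + (\<alpha>/2) *\<^sub>R u) \<bullet> (x + (\<alpha>/2) *\<^sub>R u) = x \<bullet> x + \<alpha> * (x \<bullet> u) + \<alpha>\<^sup>2/4"
      by (simp add: inner_add_left inner_add_right inner_commute power2_eq_square algebra_simps)
    thus ?thesis by (simp add: power2_norm_eq_inner)
  qed
  moreover have "(norm x)\<^sup>2 \<le> (1 + d)\<^sup>2" using assms(8) by (simp add: power_mono)
  moreover have "(1 + d)\<^sup>2 = (1 - d)\<^sup>2 + 4*d" by (simp add: power2_eq_square algebra_simps)
  ultimately have "(norm (x + (\<alpha>/2) *\<^sub>R u))\<^sup>2 < (1 - d)\<^sup>2"
    using assms(4,7) \<open>d * \<alpha>\<^sup>2 \<le> d\<close> zero_less_power[of \<alpha> 2] by linarith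
  thus ?thesis by (rule power_less_imp_less_base) (use \<open>d < 1/64\<close> in simp)
qed

lemma cone_subset_interior:
  fixes E :: "'a::euclidean_space set"
  assumes "convex E" "ball 0 (1 - d) \<subseteq> E" "E \<subseteq> ball 0 (1 + d)"
    and "0 < \<alpha>" "\<alpha> < 1" "0 < d" "d < \<alpha>\<^sup>2/64"
    and "x \<in> closure E" "norm \<nu> = 1" "\<nu> \<in> normal_cone E x"
    and "y \<in> ball x (\<alpha>/2)" "y \<noteq> x" "\<alpha> \<le> (inverse (norm (x - y)) *\<^sub>R (x - y)) \<bullet> \<nu>"
  shows "y \<in> interior E"
proof -
  define t where "t = norm (y - x)"
  define u where "u = inverse t *\<^sub>R (y - x)"
  define z where "z = x + (\<alpha>/2) *\<^sub>R u"
  have t: "0 < t" "t < \<alpha>/2" using assms(11,12) by (auto simp: t_def dist_norm norm_minus_commute)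
  have "inverse (norm (x - y)) *\<^sub>R (x - y) = - u"
    by (simp add: u_def t_def norm_minus_commute scaleR_diff_right)
  hence u: "norm u = 1" "u \<bullet> \<nu> \<le> - \<alpha>"
    using t assms(13) by (auto simp: u_def t_def)
  have "closure E \<subseteq> cball 0 (1 + d)"
    using closure_mono[OF assms(3)] assms(6) by simp
  hence "norm x \<le> 1 + d" using assms(8) by auto
  moreover have "d < 1/2"
    using assms(4,5,7) power_le_one[of \<alpha> 2] by auto
  ultimately have "norm z < 1 - d"
    unfolding z_def using assms(4-7,9) u normal_cone_ball_inner_ge[OF assms(2,6) _ assms(9,10)]
    by (intro norm_cone_step_lt) auto
  hence "z \<in> interior E"
    using interior_maximal[OF assms(2)] by (auto simp: dist_norm)
  moreover have "y \<in> open_segment z x"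
    unfolding in_segment
  proof (intro conjI exI)
    show "z \<noteq> x" using u assms(4) by (auto simp: z_def)
    show "0 < 1 - 2*t/\<alpha>" "1 - 2*t/\<alpha> < 1" using t by (auto simp: field_simps)
    have "(2*t/\<alpha>) *\<^sub>R z = (2*t/\<alpha>) *\<^sub>R x + (y - x)"
      using t assms(4) by (simp add: z_def u_def scaleR_add_right)
    thus "y = (1 - (1 - 2*t/\<alpha>)) *\<^sub>R z + (1 - 2*t/\<alpha>) *\<^sub>R x"
      by (simp add: algebra_simps)
  qed
  ultimately show ?thesis
    using in_interior_closure_convex_segment[OF assms(1) _ assms(8)] by blast
qed

lemma H1_ae_cone_subset:
  fixes E :: "(real^2) set"
  assumes "convex E" "ball 0 (1 - d) \<subseteq> E" "E \<subseteq> ball 0 (1 + d)"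
    and "0 < \<alpha>" "\<alpha> < 1" "0 < d" "d < \<alpha>\<^sup>2/64"
  shows "H1_ae_on (frontier E) (\<lambda>x. (\<exists>!\<nu>. outer_normal E x \<nu>) \<and>
    {y \<in> ball x (\<alpha>/2). y \<noteq> x \<and> (inverse (norm (x - y)) *\<^sub>R (x - y)) \<bullet> nu E x \<ge> \<alpha>} \<subseteq> E)"
proof -
  have "d < 1" using assms(4,5,7) power_le_one[of \<alpha> 2] by auto
  hence "interior E \<noteq> {}"
    using interior_maximal[OF assms(2)] assms(6) by (auto intro!: exI[of _ 0])
  with assms(1) have nonunique: "countable {x \<in> frontier E. \<not> (\<exists>!\<nu>. outer_normal E x \<nu>)}"
    by (rule countable_nonunique_outer_normal)
  have cone: "{y \<in> ball x (\<alpha>/2). y \<noteq> x \<and> (inverse (norm (x - y)) *\<^sub>R (x - y)) \<bullet> nu E x \<ge> \<alpha>} \<subseteq> E"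
    if "x \<in> frontier E" "\<exists>!\<nu>. outer_normal E x \<nu>" for x
  proof -
    have "outer_normal E x (nu E x)" unfolding nu_def using that(2) by (rule theI')
    thus ?thesis
      using cone_subset_interior[OF assms, of x "nu E x"] that(1) interior_subset
      by (auto simp: outer_normal_iff_normal_cone frontier_def)
  qed
  show ?thesis unfolding H1_ae_on_def
    by (intro countable_imp_H1_null countable_subset[OF _ nonunique]) (use cone in blast)
qed

theorem lemma3p9:
  fixes \<delta> :: "real \<Rightarrow> real"
  assumes "\<forall>\<epsilon>>0. 0 < \<delta> \<epsilon> \<and> \<delta> \<epsilon> < 1/4"
    and "(\<delta> \<longlongrightarrow> 0) (at_right 0)"
  shows "\<forall>\<alpha>. 0 < \<alpha> \<and> \<alpha> < 1 \<longrightarrow>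
    (\<exists>r>0. \<exists>\<epsilon>2>0. \<forall>\<epsilon> E. 0 < \<epsilon> \<and> \<epsilon> < \<epsilon>2 \<and> convex (E :: (real^2) set) \<and>
        ball 0 (1 - \<delta> \<epsilon>) \<subseteq> E \<and> E \<subseteq> ball 0 (1 + \<delta> \<epsilon>) \<longrightarrow>
        H1_ae_on (frontier E) (\<lambda>x. (\<exists>!\<nu>. outer_normal E x \<nu>) \<and>
          {y \<in> ball x r. y \<noteq> x \<and> (inverse (norm (x - y)) *\<^sub>R (x - y)) \<bullet> nu E x \<ge> \<alpha>} \<subseteq> E))"
proof (intro allI impI)
  fix \<alpha> :: real assume \<alpha>: "0 < \<alpha> \<and> \<alpha> < 1"
  then obtain \<epsilon>2 where \<epsilon>2: "\<epsilon>2 > 0" "\<And>\<epsilon>. 0 < \<epsilon> \<Longrightarrow> \<epsilon> < \<epsilon>2 \<Longrightarrow> \<delta> \<epsilon> < \<alpha>\<^sup>2/64"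
    using order_tendstoD(2)[OF assms(2), of "\<alpha>\<^sup>2/64"] by (auto simp: eventually_at_right_field)
  show "\<exists>r>0. \<exists>\<epsilon>2>0. \<forall>\<epsilon> E. 0 < \<epsilon> \<and> \<epsilon> < \<epsilon>2 \<and> convex (E :: (real^2) set) \<and>
      ball 0 (1 - \<delta> \<epsilon>) \<subseteq> E \<and> E \<subseteq> ball 0 (1 + \<delta> \<epsilon>) \<longrightarrow>
      H1_ae_on (frontier E) (\<lambda>x. (\<exists>!\<nu>. outer_normal E x \<nu>) \<and>
        {y \<in> ball x r. y \<noteq> x \<and> (inverse (norm (x - y)) *\<^sub>R (x - y)) \<bullet> nu E x \<ge> \<alpha>} \<subseteq> E)"
    by (rule exI[of _ "\<alpha>/2"], intro conjI exI[of _ \<epsilon>2] allI impI H1_ae_cone_subset)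
      (use \<alpha> \<epsilon>2 assms(1) in auto)
qed

end
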